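(* Let $p,q\ge0$ be integers and $\alpha=(\alpha_1,\dots,\alpha_p)$, $\beta=(\beta_1,\dots,\beta_q)$ real parameters, none of the $\beta_j$ equal to $0$, at least one of them a negative integer, and let $N$ be the largest absolute value of the negative integers among the $\alpha_i,\beta_j$. For $0\le n\le N$ put $c_n=\frac{(\alpha_1)_n\cdots(\alpha_p)_n}{(\beta_1)_n\cdots(\beta_q)_n\,n!}$ (assumed well defined, i.e. all denominators nonzero for $n\le N$), and fix complex numbers $s_n$ with $s_n^2=c_n$ (so $|s_n|^2=|c_n|$). Work in the $(N+1)$-dimensional Hilbert space with orthonormal basis $|0\rangle,\dots,|N\rangle$ and, for $w\in\mathbb{C}\setminus\{0\}$, define the truncated hypergeometric coherent state $|w;\alpha,\beta\rangle=\mathcal N(|w|)^{-1/2}\sum_{n=0}^{N}s_n w^n|n\rangle$, where $\mathcal N(|w|)=\sum_{n=0}^N|c_n|\,|w|^{2n}$ (which equals the truncated hypergeometric sum ${}_pF_q(\alpha,\beta;(-1)^\varsigma|w|^2)_N$, $\varsigma$ the number of negative parameters). Let $k\ge1$ be a divisor of $N+1$, $z\neq0$, and for $j=0,\dots,k-1$ let ${}_p^kF_q^j(|z|^2)_N=\sum_{n=0}^{(N+1)/k-1}|c_{nk+j}|\,|z|^{2(nk+j)}$, assumed nonzero, and define the truncated $k$-hypercat $$|z;\alpha,\beta;k,j\rangle={}_p^kF_q^j(|z|^2)_N^{-1/2}\sum_{n=0}^{(N+1)/k-1}s_{nk+j}\,z^{nk+j}\,|nk+j\rangle .$$ Then for each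 $j=0,1,\dots,k-1$, $$|z;\alpha,\beta;k,j\rangle=\frac1k\left(\frac{\mathcal N(|z|)}{{}_p^kF_q^j(|z|^2)_N}\right)^{1/2}\sum_{l=0}^{k-1}e^{-2\pi i jl/k}\,|ze^{2\pi i l/k};\alpha,\beta\rangle .$$
   Context: $(a)_n=a(a+1)\cdots(a+n-1)$, $(a)_0=1$, is the Pochhammer symbol. In the paper the coefficient $s_n$ is written as $1/\sqrt{{}_p\rho_q(n)}$ with ${}_p\rho_q(n)=n!\prod_j(\beta_j)_n/\prod_i(\alpha_i)_n$, and the normalizations use $|{}_p\rho_q(n)|$; any fixed choice of square root, used consistently on both sides, is meant. *)

theory Defs
  imports "HOL-Analysis.Analysis"
begin

text \<open>Parameters: alpha_1..alpha_p as al 0..al (p-1), beta_1..beta_q as be 0..be (q-1).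
  States in the (N+1)-dimensional Hilbert space are represented by their coordinate
  functions nat => complex w.r.t. the orthonormal basis |0>,...,|N>.\<close>

definition negints :: "nat \<Rightarrow> (nat \<Rightarrow> real) \<Rightarrow> nat \<Rightarrow> (nat \<Rightarrow> real) \<Rightarrow> real set" where
  "negints p al q be = {x. ((\<exists>i<p. x = al i) \<or> (\<exists>j<q. x = be j)) \<and> x \<in> \<int> \<and> x < 0}"

definition truncN :: "nat \<Rightarrow> (nat \<Rightarrow> real) \<Rightarrow> nat \<Rightarrow> (nat \<Rightarrow> real) \<Rightarrow> nat" where
  "truncN p al q be = Max ((\<lambda>x. nat \<lfloor>- x\<rfloor>) ` negints p al q be)"

definition hcoef :: "nat \<Rightarrow> (nat \<Rightarrow> real) \<Rightarrow> nat \<Rightarrow> (nat \<Rightarrow> real) \<Rightarrow> nat \<Rightarrow> real" where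
  "hcoef p al q be n =
     (\<Prod>i<p. pochhammer (al i) n) / ((\<Prod>j<q. pochhammer (be j) n) * fact n)"

definition ket :: "nat \<Rightarrow> nat \<Rightarrow> complex" where
  "ket a = (\<lambda>m. if m = a then 1 else 0)"

definition cnorm :: "(nat \<Rightarrow> real) \<Rightarrow> nat \<Rightarrow> real \<Rightarrow> real" where
  "cnorm c N r = (\<Sum>n\<le>N. \<bar>c n\<bar> * r ^ (2 * n))"

definition coh_state :: "(nat \<Rightarrow> real) \<Rightarrow> (nat \<Rightarrow> complex) \<Rightarrow> nat \<Rightarrow> complex \<Rightarrow> nat \<Rightarrow> complex" where
  "coh_state c s N w = (\<lambda>m. complex_of_real (1 / sqrt (cnorm c N (cmod w))) *
      (\<Sum>n\<le>N. s n * w ^ n * ket n m))"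

definition kF :: "(nat \<Rightarrow> real) \<Rightarrow> nat \<Rightarrow> nat \<Rightarrow> nat \<Rightarrow> real \<Rightarrow> real" where
  "kF c N k j x = (\<Sum>n<(N + 1) div k. \<bar>c (n * k + j)\<bar> * x ^ (n * k + j))"

definition hypercat :: "(nat \<Rightarrow> real) \<Rightarrow> (nat \<Rightarrow> complex) \<Rightarrow> nat \<Rightarrow> nat \<Rightarrow> nat \<Rightarrow> complex \<Rightarrow> nat \<Rightarrow> complex" where
  "hypercat c s N k j z = (\<lambda>m. complex_of_real (1 / sqrt (kF c N k j ((cmod z)\<^sup>2))) *
      (\<Sum>n<(N + 1) div k. s (n * k + j) * z ^ (n * k + j) * ket (n * k + j) m))"

end

theory Submission
  imports Defs
begin

text \<open>In coordinate m the l-th coherent state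
  contributes the phase e^{2 pi i l (m - j)/k}, and summing over l filters out exactly the
  coordinates m = j (mod k), each multiplied by k; what is left is the hypercat up to the
  ratio of the normalisations.

  Only k dvd N + 1 and c_0 = 1 (which makes N(|z|) nonzero) are needed: the identity holds
  for arbitrary amplitudes s_n, and a vanishing kF would make both sides 0, as 1 / sqrt 0 = 0.\<close>

lemma sum_powers_root_of_unity:
  fixes d k :: nat
  assumes "k > 0"
  shows "(\<Sum>l<k. exp (2 * pi * \<i> * of_nat d / of_nat k) ^ l) = (if k dvd d then of_nat k else 0)"
proof -
  define \<omega> where "\<omega> = exp (2 * pi * \<i> * of_nat d / of_nat k)"
  have \<omega>_eq_1: "\<omega> = 1 \<longleftrightarrow> k dvd d"
    unfolding \<omega>_def using complex_root_unity_eq_1[of k d] assms by (simp add: mult_ac)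
  have "\<omega> ^ k = 1"
    unfolding \<omega>_def using complex_root_unity[of k d] assms by (simp add: mult_ac)
  then have "(\<Sum>l<k. \<omega> ^ l) = (if k dvd d then of_nat k else 0)"
    using \<omega>_eq_1 by (auto simp: geometric_sum)
  then show ?thesis
    unfolding \<omega>_def .
qed

lemma sum_root_of_unity_filter:
  fixes j k m :: nat
  assumes "j < k"
  shows "(\<Sum>l<k. exp (- 2 * pi * \<i> * of_nat j * of_nat l / of_nat k) *
             exp (2 * pi * \<i> * of_nat l / of_nat k) ^ m)
       = (if m mod k = j then of_nat k else 0)"
proof -
  have k: "k > 0" using assms by simp
  have "exp (- 2 * pi * \<i> * of_nat j * of_nat l / of_nat k) * exp (2 * pi * \<i> * of_nat l / of_nat k) ^ m
      = exp (2 * pi * \<i> * of_nat (m + k - j) / of_nat k) ^ l" for l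
  proof -
    \<comment> \<open>multiplying by e^{2 pi i l} = 1 makes the exponent m + k - j natural\<close>
    have "exp (- 2 * pi * \<i> * of_nat j * of_nat l / of_nat k) * exp (2 * pi * \<i> * of_nat l / of_nat k) ^ m
        = exp (- 2 * pi * \<i> * of_nat j * of_nat l / of_nat k + of_nat m * (2 * pi * \<i> * of_nat l / of_nat k))"
      by (simp only: exp_add exp_of_nat_mult)
    also have "\<dots> = exp (- 2 * pi * \<i> * of_nat j * of_nat l / of_nat k + of_nat m * (2 * pi * \<i> * of_nat l / of_nat k)) * exp ((2 * of_nat l * pi) * \<i>)"
      using exp_integer_2pi[of "of_nat l"] by simp
    also have "\<dots> = exp (of_nat l * (2 * pi * \<i> * of_nat (m + k - j) / of_nat k))"
      unfolding exp_add [symmetric] using assms k by (simp add: of_nat_diff field_simps)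
    finally show ?thesis
      by (simp only: exp_of_nat_mult)
  qed
  moreover have "k dvd m + k - j \<longleftrightarrow> m mod k = j"
    using assms by (metis le_add2 le_trans mod_add_self2 mod_eq_dvd_iff_nat mod_if nat_less_le)
  ultimately show ?thesis
    using sum_powers_root_of_unity[OF k, of "m + k - j"] by simp
qed

lemma image_residue_class_atMost:
  fixes j k N :: nat
  assumes "j < k" "k dvd N + 1"
  shows "(\<lambda>n. n * k + j) ` {..<(N + 1) div k} = {m. m \<le> N \<and> m mod k = j}"
proof (intro equalityI subsetI)
  fix m assume "m \<in> (\<lambda>n. n * k + j) ` {..<(N + 1) div k}"
  then obtain n where n: "n < (N + 1) div k" and m: "m = n * k + j" by blast
  have "n * k + j < (n + 1) * k" using assms(1) by simp
  also have "\<dots> \<le> N + 1"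
    using n assms(2) by (metis Suc_eq_plus1 Suc_leI dvd_mult_div_cancel mult.commute mult_le_mono1)
  finally show "m \<in> {m. m \<le> N \<and> m mod k = j}" using m assms(1) by simp
next
  fix m assume m: "m \<in> {m. m \<le> N \<and> m mod k = j}"
  then have "m div k < (N + 1) div k"
    using assms(2) by (simp add: less_mult_imp_div_less)
  moreover have "m = m div k * k + j" using m div_mult_mod_eq[of m k] by simp
  ultimately show "m \<in> (\<lambda>n. n * k + j) ` {..<(N + 1) div k}" by blast
qed

lemma coh_state_apply:
  "coh_state c s N w m =
     of_real (1 / sqrt (cnorm c N (cmod w))) * (if m \<le> N then s m * w ^ m else 0)"
  by (simp add: coh_state_def ket_def if_distrib sum.delta' cong: if_cong)

lemma hypercat_apply:
  assumes "j < k" "k dvd N + 1"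
  shows "hypercat c s N k j z m =
     of_real (1 / sqrt (kF c N k j ((cmod z)\<^sup>2))) * (if m \<le> N \<and> m mod k = j then s m * z ^ m else 0)"
proof -
  have "inj_on (\<lambda>n. n * k + j) {..<(N + 1) div k}"
    using assms(1) by (intro inj_onI) simp
  then have "(\<Sum>n<(N + 1) div k. s (n * k + j) * z ^ (n * k + j) * ket (n * k + j) m)
      = (\<Sum>n\<in>{m. m \<le> N \<and> m mod k = j}. s n * z ^ n * ket n m)"
    unfolding image_residue_class_atMost[OF assms, symmetric] by (simp add: sum.reindex)
  also have "\<dots> = (if m \<le> N \<and> m mod k = j then s m * z ^ m else 0)"
    by (simp add: ket_def if_distrib sum.delta' cong: if_cong)
  finally show ?thesis
    unfolding hypercat_def by simp
qed

lemma cnorm_pos: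
  assumes "c 0 \<noteq> 0"
  shows "cnorm c N r > 0"
proof -
  have "0 < \<bar>c 0\<bar> * r ^ (2 * 0)" using assms by simp
  also have "\<dots> \<le> cnorm c N r"
    unfolding cnorm_def by (rule member_le_sum) auto
  finally show ?thesis .
qed

lemma hypercat_apply_eq_sum_coh_state:
  assumes "j < k" "k dvd N + 1" "cnorm c N (cmod z) \<noteq> 0"
  shows "hypercat c s N k j z m =
     of_real (1 / real k * sqrt (cnorm c N (cmod z) / kF c N k j ((cmod z)\<^sup>2))) *
       (\<Sum>l<k. exp (- 2 * pi * \<i> * of_nat j * of_nat l / of_nat k) *
          coh_state c s N (z * exp (2 * pi * \<i> * of_nat l / of_nat k)) m)"
    (is "_ = of_real (1 / real k * sqrt (?C / ?K)) * ?S")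
proof -
  define x where "x = (if m \<le> N \<and> m mod k = j then s m * z ^ m else 0)"
  have "cmod (z * exp (2 * pi * \<i> * of_nat l / of_nat k)) = cmod z" for l
    by (simp add: norm_mult norm_exp_eq_Re)
  then have "?S = of_real (1 / sqrt ?C) * (if m \<le> N then s m * z ^ m *
          (\<Sum>l<k. exp (- 2 * pi * \<i> * of_nat j * of_nat l / of_nat k) *
             exp (2 * pi * \<i> * of_nat l / of_nat k) ^ m) else 0)"
    by (simp add: coh_state_apply power_mult_distrib sum_distrib_left sum_divide_distrib mult_ac)
  also have "\<dots> = of_real (1 / sqrt ?C) * of_nat k * x"
    unfolding sum_root_of_unity_filter[OF assms(1)] x_def by simp
  finally have "of_real (1 / real k * sqrt (?C / ?K)) * ?S
      = of_real (1 / real k * sqrt (?C / ?K) * (1 / sqrt ?C) * real k) * x"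
    by (simp add: mult_ac)
  also have "1 / real k * sqrt (?C / ?K) * (1 / sqrt ?C) * real k = 1 / sqrt ?K"
    using assms by (simp add: real_sqrt_divide)
  finally show ?thesis
    by (simp add: hypercat_apply[OF assms(1,2)] x_def)
qed

theorem proposition4:
  fixes p q :: nat and al be :: "nat \<Rightarrow> real" and s :: "nat \<Rightarrow> complex"
    and N k :: nat and z :: complex
  assumes be_nz: "\<forall>j<q. be j \<noteq> 0"
    and be_negint: "\<exists>j<q. be j \<in> \<int> \<and> be j < 0"
    and N_def: "N = truncN p al q be"
    and wd: "\<forall>n\<le>N. (\<Prod>j<q. pochhammer (be j) n) \<noteq> 0"
    and s_sq: "\<forall>n\<le>N. (s n)\<^sup>2 = complex_of_real (hcoef p al q be n)"
    and k_pos: "k \<ge> 1" and k_dvd: "k dvd (N + 1)"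
    and z_nz: "z \<noteq> 0"
    and kF_nz: "\<forall>j<k. kF (hcoef p al q be) N k j ((cmod z)\<^sup>2) \<noteq> 0"
  shows "\<forall>j<k. hypercat (hcoef p al q be) s N k j z =
     (\<lambda>m. complex_of_real (1 / real k *
            sqrt (cnorm (hcoef p al q be) N (cmod z) / kF (hcoef p al q be) N k j ((cmod z)\<^sup>2))) *
          (\<Sum>l<k. exp (- 2 * pi * \<i> * of_nat j * of_nat l / of_nat k) *
             coh_state (hcoef p al q be) s N (z * exp (2 * pi * \<i> * of_nat l / of_nat k)) m))"
proof -
  have "cnorm (hcoef p al q be) N (cmod z) \<noteq> 0"
    using cnorm_pos[of "hcoef p al q be" N "cmod z"] by (simp add: hcoef_def)
  then show ?thesis
    using k_dvd by (intro allI impI ext hypercat_apply_eq_sum_coh_state)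
qed

end
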